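(* Let $q$ be a prime power, $\eta\ge0$ an integer, $(\delta_T,\delta_X)\in\mathbb{Z}\times\mathbb{N}$ with $\delta=\delta_T+\eta\delta_X\ge0$. For every monomial $M$ of bidegree $(\delta_T,\delta_X)$, the leading monomial of $\pi_{(\delta_T,\delta_X)}(M)$ with respect to the monomial order $<$ is $\le M$.
   Context: $R=\mathbb{F}_q[T_1,T_2,X_1,X_2]$; the bidegree of $T_1^{c_1}T_2^{c_2}X_1^{d_1}X_2^{d_2}$ is $(c_1+c_2-\eta d_1,d_1+d_2)$; $R(\delta_T,\delta_X)$ is the span of monomials of that bidegree. Monomial order: $T_1^{c'_1}T_2^{c'_2}X_1^{d'_1}X_2^{d'_2}<T_1^{c_1}T_2^{c_2}X_1^{d_1}X_2^{d_2}$ iff $d'_1+d'_2<d_1+d_2$, or ($d'_1+d'_2=d_1+d_2$ and $d'_2<d_2$), or ($d'_1=d_1$, $d'_2=d_2$, $c'_2<c_2$), or ($d'_1=d_1$, $d'_2=d_2$, $c'_2=c_2$, $c'_1<c_1$). $\mathcal{P}=\{(a,b)\in\mathbb{N}^2:a\le\delta_X,\eta a+b\le\delta\}$; $M(d_2,c_2)=T_1^{\delta-\eta d_2-c_2}T_2^{c_2}X_1^{\delta_X-d_2}X_2^{d_2}$ for $(d_2,c_2)\in\mathcal{P}$ (these are exactly the monomials of bidegree $(\delta_T,\delta_X)$). $A=\delta_X$ if $\delta_T\ge0$, $A=\delta/\eta$ if $\delta_T<0$. Condition (H): $\eta\ge2$, $\delta_T<0$, $\eta\mid\delta_T$, $q\le\delta_X+\delta_T/\eta$.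 $p:\mathcal{P}\to\mathcal{P}$, $(d_2,c_2)\mapsto(d'_2,c'_2)$: $d'_2=d_2$ if $d_2\in\{0,A\}$, otherwise $d'_2\in\{1,\dots,q-1\}$ with $d'_2\equiv d_2\pmod{q-1}$; $c'_2=0$ if $c_2=0$; $c'_2=\delta-\eta d'_2$ if $c_2=\delta-\eta d_2$; otherwise $c'_2\in\{1,\dots,q-1\}$ with $c'_2\equiv c_2\pmod{q-1}$. The linear map $\pi_{(\delta_T,\delta_X)}$ on $R(\delta_T,\delta_X)$ is $\pi(M(d_2,c_2))=M(p(d_2,c_2))$, except when (H) holds and $(d_2,c_2)=(\delta/\eta,0)$: then with $\delta/\eta=k(q-1)+r$, $k\in\mathbb{N}$, $r\in\{1,\dots,q-1\}$, $\pi(M(\delta/\eta,0))=M(r,0)+M(r,\eta k(q-1))-M(r,q-1)$. *)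

theory Defs
  imports Main
begin

text \<open>A monomial T1^c1 T2^c2 X1^d1 X2^d2 is encoded as the exponent tuple (c1, c2, d1, d2).
A polynomial in R = F_q[T1,T2,X1,X2] is encoded by its coefficient function
(finitely supported in all uses below).\<close>

type_synonym mono = "nat \<times> nat \<times> nat \<times> nat"

definition bideg :: "nat \<Rightarrow> mono \<Rightarrow> int \<times> nat" where
  "bideg eta m = (case m of (c1, c2, d1, d2) \<Rightarrow>
     (int c1 + int c2 - int eta * int d1, d1 + d2))"

definition mono_less :: "mono \<Rightarrow> mono \<Rightarrow> bool" where
  "mono_less m' m = (case m' of (c1', c2', d1', d2') \<Rightarrow> case m of (c1, c2, d1, d2) \<Rightarrow>
     d1' + d2' < d1 + d2
     \<or> (d1' + d2' = d1 + d2 \<and> d2' < d2)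
     \<or> (d1' = d1 \<and> d2' = d2 \<and> c2' < c2)
     \<or> (d1' = d1 \<and> d2' = d2 \<and> c2' = c2 \<and> c1' < c1))"

definition mono_le :: "mono \<Rightarrow> mono \<Rightarrow> bool" where
  "mono_le m' m = (m' = m \<or> mono_less m' m)"

definition lead_mono :: "(mono \<Rightarrow> 'a::zero) \<Rightarrow> mono" where
  "lead_mono p = (THE m. p m \<noteq> 0 \<and> (\<forall>m'. p m' \<noteq> 0 \<longrightarrow> mono_le m' m))"

definition mono_poly :: "mono \<Rightarrow> mono \<Rightarrow> 'a::{zero,one}" where
  "mono_poly m = (\<lambda>x. if x = m then 1 else 0)"

definition Mon :: "nat \<Rightarrow> int \<Rightarrow> nat \<Rightarrow> nat \<times> nat \<Rightarrow> mono" where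
  "Mon eta dT dX dc = (case dc of (d2, c2) \<Rightarrow>
     (nat (dT + int eta * int dX - int eta * int d2 - int c2), c2, dX - d2, d2))"

definition condH :: "nat \<Rightarrow> nat \<Rightarrow> int \<Rightarrow> nat \<Rightarrow> bool" where
  "condH q eta dT dX = (eta \<ge> 2 \<and> dT < 0 \<and> int eta dvd dT \<and> int q \<le> int dX + dT div int eta)"

text \<open>d2 = A, where A = dX if dT >= 0 and A = delta/eta (a rational number) if dT < 0.\<close>
definition is_A :: "nat \<Rightarrow> int \<Rightarrow> nat \<Rightarrow> nat \<Rightarrow> bool" where
  "is_A eta dT dX d2 = ((dT \<ge> 0 \<and> d2 = dX) \<or>
     (dT < 0 \<and> int eta * int d2 = dT + int eta * int dX))"

text \<open>For n >= 1: the unique element of {1,...,q-1} congruent to n modulo q-1.\<close>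
definition red :: "nat \<Rightarrow> nat \<Rightarrow> nat" where
  "red q n = (n - 1) mod (q - 1) + 1"

definition pmap :: "nat \<Rightarrow> nat \<Rightarrow> int \<Rightarrow> nat \<Rightarrow> nat \<times> nat \<Rightarrow> nat \<times> nat" where
  "pmap q eta dT dX dc = (case dc of (d2, c2) \<Rightarrow>
     (let delta = dT + int eta * int dX;
          d2' = (if d2 = 0 \<or> is_A eta dT dX d2 then d2 else red q d2);
          c2' = (if c2 = 0 then 0
                 else if int c2 = delta - int eta * int d2 then nat (delta - int eta * int d2')
                 else red q c2)
      in (d2', c2')))"

definition pi_mon :: "nat \<Rightarrow> nat \<Rightarrow> int \<Rightarrow> nat \<Rightarrow> mono \<Rightarrow> mono \<Rightarrow> 'a::ring_1" where
  "pi_mon q eta dT dX m = (case m of (c1, c2, d1, d2) \<Rightarrow>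
     (let delta = dT + int eta * int dX in
      if condH q eta dT dX \<and> int eta * int d2 = delta \<and> c2 = 0 then
        (let r = red q d2; k = (d2 - r) div (q - 1) in
         (\<lambda>x. mono_poly (Mon eta dT dX (r, 0)) x
              + mono_poly (Mon eta dT dX (r, eta * k * (q - 1))) x
              - mono_poly (Mon eta dT dX (r, q - 1)) x))
      else mono_poly (Mon eta dT dX (pmap q eta dT dX (d2, c2)))))"

end

theory Submission
  imports Defs "HOL-Library.Product_Lexorder"
begin

text \<open>Away from the exceptional monomial of condition (H), \<open>\<pi>\<close> maps a monomial \<open>M(d\<^sub>2,c\<^sub>2)\<close>
to a single monomial \<open>M(d\<^sub>2',c\<^sub>2')\<close>, and reduction modulo \<open>q - 1\<close> into \<open>{1,\<dots>,q-1}\<close> never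
increases an exponent: either \<open>d\<^sub>2' < d\<^sub>2\<close>, or \<open>d\<^sub>2' = d\<^sub>2\<close> and \<open>c\<^sub>2' \<le> c\<^sub>2\<close>. The exceptional
monomial \<open>M(\<delta>/\<eta>,0)\<close> has \<open>\<delta>/\<eta> \<ge> q\<close>, so all three monomials in its image have the strictly
smaller \<open>X\<^sub>2\<close>-exponent \<open>r < \<delta>/\<eta>\<close>; whatever cancellation happens, the leading monomial of the
image is one of them.\<close>

definition mono_key :: "mono \<Rightarrow> nat \<times> nat \<times> nat \<times> nat" where
  "mono_key m = (case m of (c1, c2, d1, d2) \<Rightarrow> (d1 + d2, d2, c2, c1))"

lemma inj_mono_key: "inj mono_key"
  by (rule injI) (auto simp: mono_key_def split: prod.splits)

lemma mono_less_iff_mono_key: "mono_less m' m \<longleftrightarrow> mono_key m' < mono_key m"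
  by (cases m'; cases m) (auto simp: mono_less_def mono_key_def)

lemma mono_le_iff_mono_key: "mono_le m' m \<longleftrightarrow> mono_key m' \<le> mono_key m"
  using inj_mono_key by (auto simp: mono_le_def mono_less_iff_mono_key order_le_less inj_eq)

lemma lead_mono_eqI:
  assumes "p m \<noteq> 0" and "\<And>m'. p m' \<noteq> 0 \<Longrightarrow> mono_le m' m"
  shows "lead_mono p = m"
  unfolding lead_mono_def
proof (rule the_equality)
  fix m'
  assume "p m' \<noteq> 0 \<and> (\<forall>m''. p m'' \<noteq> 0 \<longrightarrow> mono_le m'' m')"
  then have "mono_le m m'" and "mono_le m' m"
    using assms by blast+
  then have "mono_key m \<le> mono_key m'" and "mono_key m' \<le> mono_key m"
    by (simp_all add: mono_le_iff_mono_key)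
  then show "m' = m"
    using inj_mono_key by (simp add: inj_eq)
qed (use assms in blast)

lemma lead_mono_mono_poly: "lead_mono (mono_poly m :: mono \<Rightarrow> 'a::zero_neq_one) = m"
  by (rule lead_mono_eqI) (auto simp: mono_poly_def mono_le_def split: if_splits)

lemma lead_mono_in_support:
  assumes "finite {m. p m \<noteq> 0}" and "p m\<^sub>0 \<noteq> 0"
  shows "p (lead_mono p) \<noteq> 0"
proof -
  let ?S = "{m. p m \<noteq> 0}"
  have "Max (mono_key ` ?S) \<in> mono_key ` ?S"
    using assms by (intro Max_in finite_imageI) blast+
  then obtain m where m: "p m \<noteq> 0" "mono_key m = Max (mono_key ` ?S)"
    by auto
  have "lead_mono p = m"
  proof (rule lead_mono_eqI)
    fix m'
    assume "p m' \<noteq> 0"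
    then show "mono_le m' m"
      using assms(1) m(2) by (simp add: mono_le_iff_mono_key)
  qed (rule m(1))
  with m(1) show ?thesis
    by simp
qed

lemma lead_mono_three_terms:
  assumes "c \<noteq> a" and "c \<noteq> b"
  shows "lead_mono (\<lambda>x. mono_poly a x + mono_poly b x - mono_poly c x :: 'a::ring_1) \<in> {a, b, c}"
proof -
  let ?p = "\<lambda>x. mono_poly a x + mono_poly b x - mono_poly c x :: 'a"
  have support: "{m. ?p m \<noteq> 0} \<subseteq> {a, b, c}"
    by (auto simp: mono_poly_def)
  have "?p c \<noteq> 0"
    using assms by (simp add: mono_poly_def)
  then have "?p (lead_mono ?p) \<noteq> 0"
    using support by (intro lead_mono_in_support) (auto intro: finite_subset)
  with support show ?thesis
    by blast
qed

lemma Mon_of_bideg: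
  assumes "bideg eta (c1, c2, d1, d2) = (dT, dX)"
  shows "Mon eta dT dX (d2, c2) = (c1, c2, d1, d2)"
  using assms by (auto simp: bideg_def Mon_def algebra_simps)

lemma mono_less_Mon_if_X2_less:
  assumes "d2' < d2" and "d2 \<le> dX"
  shows "mono_less (Mon eta dT dX (d2', c2')) (Mon eta dT dX (d2, c2))"
  using assms by (auto simp: Mon_def mono_less_def)

lemma mono_le_Mon_if_T2_le:
  assumes "c2' \<le> c2"
  shows "mono_le (Mon eta dT dX (d2, c2')) (Mon eta dT dX (d2, c2))"
  using assms by (auto simp: Mon_def mono_le_def mono_less_def order_le_less)

lemma red_le: "1 \<le> n \<Longrightarrow> red q n \<le> n"
  using mod_less_eq_dividend[of "n - 1" "q - 1"] unfolding red_def by linarith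

lemma red_less:
  assumes "2 \<le> q" and "q \<le> n"
  shows "red q n < n"
  using assms mod_less_divisor[of "q - 1" "n - 1"] unfolding red_def by linarith

lemma pmap_decreasing:
  assumes "pmap q eta dT dX (d2, c2) = (d2', c2')"
  shows "d2' \<le> d2" and "d2' = d2 \<Longrightarrow> c2' \<le> c2"
  using assms red_le[of d2 q] red_le[of c2 q]
  by (auto simp: pmap_def Let_def split: if_splits)

lemma mono_le_lead_mono_pi_mon_generic:
  assumes "bideg eta M = (dT, dX)"
    and M: "M = (c1, c2, d1, d2)"
    and "\<not> (condH q eta dT dX \<and> int eta * int d2 = dT + int eta * int dX \<and> c2 = 0)"
  shows "mono_le (lead_mono (pi_mon q eta dT dX M :: mono \<Rightarrow> 'a::ring_1)) M"
proof -
  obtain d2' c2' where p: "pmap q eta dT dX (d2, c2) = (d2', c2')"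
    by fastforce
  have M_Mon: "M = Mon eta dT dX (d2, c2)"
    using assms(1) by (simp add: M Mon_of_bideg)
  have "d2 \<le> dX"
    using assms(1) by (simp add: M bideg_def)
  have "pi_mon q eta dT dX M = (mono_poly (Mon eta dT dX (d2', c2')) :: mono \<Rightarrow> 'a)"
    unfolding pi_mon_def M Let_def prod.case if_not_P[OF assms(3)] p ..
  then have "lead_mono (pi_mon q eta dT dX M :: mono \<Rightarrow> 'a) = Mon eta dT dX (d2', c2')"
    by (simp add: lead_mono_mono_poly)
  moreover have "mono_le (Mon eta dT dX (d2', c2')) (Mon eta dT dX (d2, c2))"
    using pmap_decreasing[OF p] \<open>d2 \<le> dX\<close> mono_less_Mon_if_X2_less[of d2' d2 dX eta dT c2' c2]
      mono_le_Mon_if_T2_le[of c2' c2 eta dT dX d2]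
    by (cases "d2' = d2") (auto simp: mono_le_def)
  ultimately show ?thesis
    by (simp add: M_Mon)
qed

lemma exceptional_X2_exponent_bounds:
  assumes "condH q eta dT dX" and "int eta * int d2 = dT + int eta * int dX"
  shows "q \<le> d2" and "d2 \<le> dX"
proof -
  have eta: "eta \<ge> 2" and "dT < 0" and "int eta dvd dT"
    and q: "int q \<le> int dX + dT div int eta"
    using assms(1) by (auto simp: condH_def)
  then have "int eta * int d2 = int eta * (int dX + dT div int eta)"
    using assms(2) by (simp add: algebra_simps)
  then have d2: "int d2 = int dX + dT div int eta"
    using eta by simp
  have "dT div int eta < 0"
    using \<open>dT < 0\<close> eta by (simp add: div_neg_pos_less0)
  with d2 q show "q \<le> d2" and "d2 \<le> dX"
    by linarith+
qed

lemma mono_less_lead_mono_pi_mon_exceptional: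
  assumes q: "2 \<le> q"
    and "bideg eta M = (dT, dX)"
    and M: "M = (c1, 0, d1, d2)"
    and H: "condH q eta dT dX" and d2: "int eta * int d2 = dT + int eta * int dX"
  shows "mono_less (lead_mono (pi_mon q eta dT dX M :: mono \<Rightarrow> 'a::ring_1)) M"
proof -
  define r where "r = red q d2"
  define k where "k = (d2 - r) div (q - 1)"
  define a where "a = Mon eta dT dX (r, 0)"
  define b where "b = Mon eta dT dX (r, eta * k * (q - 1))"
  define c where "c = Mon eta dT dX (r, q - 1)"
  have M_Mon: "M = Mon eta dT dX (d2, 0)"
    using assms(2) by (simp add: M Mon_of_bideg)
  have "q \<le> d2" and "d2 \<le> dX"
    using exceptional_X2_exponent_bounds[OF H d2] by auto
  then have "r < d2"
    using q by (simp add: r_def red_less)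
  have "eta * k \<noteq> 1"
    using H by (auto simp: condH_def)
  then have "c \<noteq> a" and "c \<noteq> b"
    using q by (auto simp: a_def b_def c_def Mon_def)
  then have lead: "lead_mono (\<lambda>x. mono_poly a x + mono_poly b x - mono_poly c x :: 'a) \<in> {a, b, c}"
    by (rule lead_mono_three_terms)
  have "pi_mon q eta dT dX M = (\<lambda>x. mono_poly a x + mono_poly b x - mono_poly c x :: 'a)"
    using H d2 by (simp add: M pi_mon_def Let_def a_def b_def c_def r_def k_def)
  moreover have "mono_less m M" if "m \<in> {a, b, c}" for m
    using that mono_less_Mon_if_X2_less[OF \<open>r < d2\<close> \<open>d2 \<le> dX\<close>]
    by (auto simp: M_Mon a_def b_def c_def)
  ultimately show ?thesis
    using lead by simp
qed

lemma two_le_card_UNIV_field: "2 \<le> card (UNIV :: 'a::{finite,field} set)"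
  using card_mono[of "UNIV :: 'a set" "{0, 1}"] by simp

theorem lemma3p5:
  fixes eta :: nat and dT :: int and dX :: nat and M :: mono
  assumes "dT + int eta * int dX \<ge> 0"
    and "bideg eta M = (dT, dX)"
  shows "mono_le (lead_mono (pi_mon (card (UNIV :: 'a set)) eta dT dX M :: mono \<Rightarrow> 'a::{finite,field})) M"
proof -
  obtain c1 c2 d1 d2 where M: "M = (c1, c2, d1, d2)"
    by (cases M) auto
  let ?q = "card (UNIV :: 'a set)"
  show ?thesis
  proof (cases "condH ?q eta dT dX \<and> int eta * int d2 = dT + int eta * int dX \<and> c2 = 0")
    case True
    then show ?thesis
      using mono_less_lead_mono_pi_mon_exceptional[OF two_le_card_UNIV_field assms(2)]
      by (auto simp: M mono_le_def)
  next
    case False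
    then show ?thesis
      using mono_le_lead_mono_pi_mon_generic[OF assms(2) M] by simp
  qed
qed

end
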